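(* Let $s\ge1$, $n\ge1$ be integers and $J>0$. The ground space of $H=H_n^s+H_n^J$ is the span of the product states $\{|{\bf t}\rangle:{\bf t}\in T_n\}$ (each of which is the uniform superposition over its own equivalence class, a singleton), and it has dimension $|T_n|$.
   Context: Let $\Sigma=\{-s,\dots,s\}$, $\Sigma_*=\Sigma\setminus\{0\}$. The spin chain on $n$ sites has local space $\mathbb{C}^{2s+1}$ with basis $\{|j\rangle:j\in\Sigma\}$ and $|{\bf t}\rangle=|t_1\rangle\otimes\cdots\otimes|t_n\rangle$. For $m\in\Sigma_*$, $P^m=|\phi_m\rangle\langle\phi_m|$ with $|\phi_m\rangle=\frac1{\sqrt2}(|0,m\rangle-|m,0\rangle)$; for $m\in\{1,\dots,s\}$, $Q^m=|\chi_m\rangle\langle\chi_m|$ with $|\chi_m\rangle=\frac1{\sqrt2}(|0,0\rangle-|m,-m\rangle)$, acting on two neighboring spins. $H_n^s=\sum_{k=1}^{n-1}\big(\sum_{m\in\Sigma_*}P^m_{k,k+1}+\sum_{m=1}^sQ^m_{k,k+1}\big)$ and $H_n^J=J\sum_{k=1}^n(|0\rangle\langle0|)_k$. $T_n\subseteq\Sigma_*^n$ is the set of strings $t_1\cdots t_n$ with no index $j$ such that $t_j=m\in\{1,\dots,s\}$ and $t_{j+1}=-m$. Equivalence of strings in $\Sigma^n$ is generated by the local moves $(0,m)\leftrightarrow(m,0)$ for $m\in\Sigma_*$ and $(0,0)\leftrightarrow(m,-m)$ for $m\in\{1,\dots,s\}$ on adjacent positions. *)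

theory Defs
  imports Complex_Main "HOL-Library.Function_Algebras"
begin

(* Spin values Sigma = {-s..s}, Sigma_* = Sigma - {0}.  Strings t_1..t_n are lists of length n,
   position k (1-based in the paper) is index k-1 here. *)
definition Sig :: "nat \<Rightarrow> int set" where
  "Sig s = {- int s .. int s}"

definition Sig_star :: "nat \<Rightarrow> int set" where
  "Sig_star s = Sig s - {0}"

definition configs :: "nat \<Rightarrow> nat \<Rightarrow> int list set" where
  "configs n s = {t. length t = n \<and> set t \<subseteq> Sig s}"

definition Tn :: "nat \<Rightarrow> nat \<Rightarrow> int list set" where
  "Tn n s = {t. length t = n \<and> set t \<subseteq> Sig_star s \<and>
      \<not> (\<exists>j. j + 1 < n \<and> t ! j \<in> {1 .. int s} \<and> t ! (j+1) = - (t ! j))}"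

(* Hilbert space (C^{2s+1})^{\<otimes> n}: functions on configurations, zero outside *)
definition hspace :: "nat \<Rightarrow> nat \<Rightarrow> (int list \<Rightarrow> complex) set" where
  "hspace n s = {\<psi>. \<forall>t. t \<notin> configs n s \<longrightarrow> \<psi> t = 0}"

definition ket :: "int list \<Rightarrow> (int list \<Rightarrow> complex)" where
  "ket t = (\<lambda>u. if u = t then 1 else 0)"

(* two-site amplitudes: phi_m(a,b) = <a,b|phi_m>, chi_m(a,b) = <a,b|chi_m> *)
definition phi :: "int \<Rightarrow> int \<Rightarrow> int \<Rightarrow> complex" where
  "phi m a b = (of_bool (a = 0 \<and> b = m) - of_bool (a = m \<and> b = 0)) / sqrt 2"

definition chi :: "int \<Rightarrow> int \<Rightarrow> int \<Rightarrow> complex" where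
  "chi m a b = (of_bool (a = 0 \<and> b = 0) - of_bool (a = m \<and> b = - m)) / sqrt 2"

(* matrix element <a,b| (sum_m P^m + sum_m Q^m) |c,d> of the local two-site term *)
definition hloc :: "nat \<Rightarrow> int \<Rightarrow> int \<Rightarrow> int \<Rightarrow> int \<Rightarrow> complex" where
  "hloc s a b c d =
     (\<Sum>m\<in>Sig_star s. phi m a b * cnj (phi m c d)) +
     (\<Sum>m\<in>{1 .. int s}. chi m a b * cnj (chi m c d))"

definition Hmat :: "nat \<Rightarrow> nat \<Rightarrow> real \<Rightarrow> int list \<Rightarrow> int list \<Rightarrow> complex" where
  "Hmat n s J t u =
     (\<Sum>k\<in>{0..<n-1}.
        of_bool (\<forall>j<n. j \<noteq> k \<and> j \<noteq> k+1 \<longrightarrow> t ! j = u ! j) *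
        hloc s (t ! k) (t ! (k+1)) (u ! k) (u ! (k+1)))
   + of_bool (t = u) * of_real J * of_nat (card {k. k < n \<and> t ! k = 0})"

definition Hop :: "nat \<Rightarrow> nat \<Rightarrow> real \<Rightarrow> (int list \<Rightarrow> complex) \<Rightarrow> (int list \<Rightarrow> complex)" where
  "Hop n s J \<psi> = (\<lambda>t. if t \<in> configs n s then (\<Sum>u\<in>configs n s. Hmat n s J t u * \<psi> u) else 0)"

definition eigenvalues :: "nat \<Rightarrow> nat \<Rightarrow> real \<Rightarrow> real set" where
  "eigenvalues n s J = {e. \<exists>\<psi>\<in>hspace n s. \<psi> \<noteq> 0 \<and> Hop n s J \<psi> = (\<lambda>t. of_real e * \<psi> t)}"

definition ground_energy :: "nat \<Rightarrow> nat \<Rightarrow> real \<Rightarrow> real" where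
  "ground_energy n s J = Min (eigenvalues n s J)"

definition ground_space :: "nat \<Rightarrow> nat \<Rightarrow> real \<Rightarrow> (int list \<Rightarrow> complex) set" where
  "ground_space n s J = {\<psi>\<in>hspace n s.
      Hop n s J \<psi> = (\<lambda>t. of_real (ground_energy n s J) * \<psi> t)}"

definition cscale :: "complex \<Rightarrow> (int list \<Rightarrow> complex) \<Rightarrow> (int list \<Rightarrow> complex)" where
  "cscale c \<psi> = (\<lambda>t. c * \<psi> t)"

definition local_move :: "nat \<Rightarrow> int list \<Rightarrow> int list \<Rightarrow> bool" where
  "local_move s t u \<longleftrightarrow> length t = length u \<and>
     (\<exists>k. k + 1 < length t \<and> (\<forall>j<length t. j \<noteq> k \<and> j \<noteq> k+1 \<longrightarrow> t ! j = u ! j) \<and>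
        ((\<exists>m\<in>Sig_star s. (t!k = 0 \<and> t!(k+1) = m \<and> u!k = m \<and> u!(k+1) = 0)
                         \<or> (t!k = m \<and> t!(k+1) = 0 \<and> u!k = 0 \<and> u!(k+1) = m))
       \<or> (\<exists>m\<in>{1 .. int s}. (t!k = 0 \<and> t!(k+1) = 0 \<and> u!k = m \<and> u!(k+1) = - m)
                         \<or> (t!k = m \<and> t!(k+1) = - m \<and> u!k = 0 \<and> u!(k+1) = 0))))"

definition equiv_strings :: "nat \<Rightarrow> int list \<Rightarrow> int list \<Rightarrow> bool" where
  "equiv_strings s = (local_move s)\<^sup>*\<^sup>*"

definition equiv_class :: "nat \<Rightarrow> nat \<Rightarrow> int list \<Rightarrow> int list set" where
  "equiv_class n s t = {u \<in> configs n s. equiv_strings s t u}"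

definition class_state :: "nat \<Rightarrow> nat \<Rightarrow> int list \<Rightarrow> (int list \<Rightarrow> complex)" where
  "class_state n s t = (\<lambda>u. if u \<in> equiv_class n s t then 1 / sqrt (real (card (equiv_class n s t))) else 0)"

end

theory Submission
  imports Defs
begin

(* The Hamiltonian is a sum of squares: with v_i running over the states phi_m, chi_m placed on
   a bond and N t the number of zeros of t,
     <psi, H psi> = sum_i |<v_i, psi>|^2 + J * sum_t N t * |psi t|^2,
   so no eigenvalue is negative.  There are only finitely many eigenvalues (eigenvectors of
   distinct eigenvalues are independent in a finite-dimensional space), so the ground energy,
   defined as their Min, is the least one; the kets of T_n are annihilated by H, so it is 0.
   A zero-energy state psi vanishes on strings with a zero (the J term), hence also on strings t
   with a pair (m, -m) on a bond, because <chi_m on that bond, psi> = (psi r - psi t) / sqrt 2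
   where r is t with that bond cleared.  So the ground space consists of the states supported
   on T_n, and strings in T_n admit no local move, so their classes are singletons. *)

section \<open>Linear algebra\<close>

lemma sum_fun_apply: "sum f A x = (\<Sum>a\<in>A. f a x)"
  by (induct A rule: infinite_finite_induct) auto

lemma cnj_mult_self: "cnj z * z = of_real ((cmod z)\<^sup>2)"
  using complex_norm_square[of z] by (simp add: mult.commute)

lemma quadratic_form_gram:
  "(\<Sum>t\<in>C. cnj (\<psi> t) * (\<Sum>u\<in>C. (\<Sum>i\<in>I. G i t * cnj (G i u)) * \<psi> u))
     = of_real (\<Sum>i\<in>I. (cmod (\<Sum>u\<in>C. cnj (G i u) * \<psi> u))\<^sup>2)"
proof -
  let ?z = "\<lambda>i. \<Sum>u\<in>C. cnj (G i u) * \<psi> u"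
  have "(\<Sum>t\<in>C. cnj (\<psi> t) * (\<Sum>u\<in>C. (\<Sum>i\<in>I. G i t * cnj (G i u)) * \<psi> u))
      = (\<Sum>t\<in>C. \<Sum>u\<in>C. \<Sum>i\<in>I. (cnj (\<psi> t) * G i t) * (cnj (G i u) * \<psi> u))"
    by (simp add: sum_distrib_left sum_distrib_right mult_ac)
  also have "\<dots> = (\<Sum>t\<in>C. \<Sum>i\<in>I. \<Sum>u\<in>C. (cnj (\<psi> t) * G i t) * (cnj (G i u) * \<psi> u))"
    by (rule sum.cong[OF refl], rule sum.swap)
  also have "\<dots> = (\<Sum>i\<in>I. \<Sum>t\<in>C. \<Sum>u\<in>C. (cnj (\<psi> t) * G i t) * (cnj (G i u) * \<psi> u))"
    by (rule sum.swap)
  also have "\<dots> = (\<Sum>i\<in>I. (\<Sum>t\<in>C. cnj (\<psi> t) * G i t) * ?z i)"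
    by (simp only: sum_product)
  also have "\<dots> = (\<Sum>i\<in>I. cnj (?z i) * ?z i)"
    by (simp add: mult.commute)
  also have "\<dots> = of_real (\<Sum>i\<in>I. (cmod (?z i))\<^sup>2)"
    by (simp only: cnj_mult_self of_real_sum)
  finally show ?thesis .
qed

lemma quadratic_form_gram_plus_diagonal:
  fixes d :: "'a \<Rightarrow> real"
  assumes C: "finite C"
  shows "(\<Sum>t\<in>C. cnj (\<psi> t) * (\<Sum>u\<in>C. ((\<Sum>i\<in>I. G i t * cnj (G i u)) + of_bool (t = u) * of_real (d t)) * \<psi> u))
       = of_real ((\<Sum>i\<in>I. (cmod (\<Sum>u\<in>C. cnj (G i u) * \<psi> u))\<^sup>2) + (\<Sum>t\<in>C. d t * (cmod (\<psi> t))\<^sup>2))"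
proof -
  have "cnj (\<psi> t) * (\<Sum>u\<in>C. of_bool (t = u) * of_real (d t) * \<psi> u)
      = of_real (d t * (cmod (\<psi> t))\<^sup>2)" if "t \<in> C" for t
  proof -
    have "(\<Sum>u\<in>C. of_bool (t = u) * of_real (d t) * \<psi> u)
        = (\<Sum>u\<in>C. if t = u then of_real (d t) * \<psi> u else 0)"
      by (rule sum.cong) auto
    also have "\<dots> = of_real (d t) * \<psi> t"
      using C that by simp
    finally have "cnj (\<psi> t) * (\<Sum>u\<in>C. of_bool (t = u) * of_real (d t) * \<psi> u)
        = of_real (d t) * (cnj (\<psi> t) * \<psi> t)"
      by (simp add: mult.left_commute)
    then show ?thesis
      by (simp only: cnj_mult_self of_real_mult)
  qed
  then have diag: "(\<Sum>t\<in>C. cnj (\<psi> t) * (\<Sum>u\<in>C. of_bool (t = u) * of_real (d t) * \<psi> u))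
      = of_real (\<Sum>t\<in>C. d t * (cmod (\<psi> t))\<^sup>2)"
    by (simp only: of_real_sum cong: sum.cong)
  have "(\<Sum>t\<in>C. cnj (\<psi> t) * (\<Sum>u\<in>C. ((\<Sum>i\<in>I. G i t * cnj (G i u)) + of_bool (t = u) * of_real (d t)) * \<psi> u))
      = (\<Sum>t\<in>C. cnj (\<psi> t) * (\<Sum>u\<in>C. (\<Sum>i\<in>I. G i t * cnj (G i u)) * \<psi> u))
      + (\<Sum>t\<in>C. cnj (\<psi> t) * (\<Sum>u\<in>C. of_bool (t = u) * of_real (d t) * \<psi> u))"
    by (simp only: distrib_right sum.distrib distrib_left)
  then show ?thesis
    by (simp only: quadratic_form_gram diag of_real_add)
qed

context vector_space
begin

lemma eigenvector_combination_eq_0: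
  assumes f: "Vector_Spaces.linear scale scale f" and "finite E"
    and "\<And>c. c \<in> E \<Longrightarrow> v c \<noteq> 0 \<and> f (v c) = c *s v c"
    and "(\<Sum>c\<in>E. a c *s v c) = 0" and "c \<in> E"
  shows "a c = 0"
  using assms(2-)
proof (induction E arbitrary: a c rule: finite_induct)
  case empty
  then show ?case by simp
next
  case (insert b E)
  interpret f: Vector_Spaces.linear scale scale f by (fact f)
  let ?S = "\<Sum>c\<in>insert b E. a c *s v c"
  have "f ?S = (\<Sum>c\<in>insert b E. (a c * c) *s v c)"
    using insert.prems(1) by (simp add: f.sum f.scale)
  moreover have "b *s ?S = (\<Sum>c\<in>insert b E. (a c * b) *s v c)"
    by (simp add: scale_sum_right mult.commute)
  ultimately have "(\<Sum>c\<in>insert b E. (a c * (c - b)) *s v c) = f ?S - b *s ?S"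
    by (simp add: right_diff_distrib scale_left_diff_distrib sum_subtractf)
  then have "(\<Sum>c\<in>E. (a c * (c - b)) *s v c) = 0"
    using insert.hyps insert.prems(2) by simp
  then have "a c * (c - b) = 0" if "c \<in> E" for c
    using insert.prems(1) that by (intro insert.IH) auto
  then have E0: "a c = 0" if "c \<in> E" for c
    using that insert.hyps(2) by auto
  then have "a b *s v b = 0"
    using insert.hyps insert.prems(2) by simp
  then show ?case
    using E0 insert.prems(1,3) by auto
qed

lemma card_eigenvalues_le:
  assumes f: "Vector_Spaces.linear scale scale f" and B: "finite B"
    and E: "finite E" "E \<subseteq> {c. \<exists>x\<in>span B. x \<noteq> 0 \<and> f x = c *s x}"
  shows "card E \<le> card B"
proof -
  define v where "v c = (SOME x. x \<in> span B \<and> x \<noteq> 0 \<and> f x = c *s x)" for c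
  have v: "v c \<in> span B \<and> v c \<noteq> 0 \<and> f (v c) = c *s v c" if "c \<in> E" for c
  proof -
    have "\<exists>x. x \<in> span B \<and> x \<noteq> 0 \<and> f x = c *s x"
      using E(2) that by blast
    then show ?thesis
      unfolding v_def by (rule someI_ex)
  qed
  have inj: "inj_on v E"
  proof (rule inj_onI)
    fix c d assume c: "c \<in> E" and d: "d \<in> E" and eq: "v c = v d"
    have "c *s v c = f (v d)"
      using v[OF c] eq by simp
    also have "\<dots> = d *s v c"
      using v[OF d] eq by simp
    finally show "c = d"
      using v[OF c] by simp
  qed
  have "independent (v ` E)"
  proof (rule independent_if_scalars_zero)
    show "finite (v ` E)" using E by simp
    fix a x assume sum: "(\<Sum>x\<in>v ` E. a x *s x) = 0" and "x \<in> v ` E"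
    then obtain c where c: "c \<in> E" "x = v c" by blast
    have "(\<Sum>c\<in>E. a (v c) *s v c) = 0"
      using sum by (simp add: sum.reindex[OF inj])
    then show "a x = 0"
      using eigenvector_combination_eq_0[OF f E(1), of v "a \<circ> v" c] v c by simp
  qed
  moreover have "v ` E \<subseteq> span B"
    using v by blast
  ultimately have "card (v ` E) \<le> card B"
    using independent_span_bound[OF B] by blast
  then show ?thesis
    by (simp add: card_image[OF inj])
qed

lemma finite_eigenvalues:
  assumes "Vector_Spaces.linear scale scale f" and "finite B"
  shows "finite {c. \<exists>x\<in>span B. x \<noteq> 0 \<and> f x = c *s x}"
proof (rule ccontr)
  assume "infinite {c. \<exists>x\<in>span B. x \<noteq> 0 \<and> f x = c *s x}"
  then obtain E where "finite E" "card E = Suc (card B)"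
    "E \<subseteq> {c. \<exists>x\<in>span B. x \<noteq> 0 \<and> f x = c *s x}"
    using infinite_arbitrarily_large by blast
  then show False
    using card_eigenvalues_le[OF assms] by fastforce
qed

end

lemma finite_Sig_star: "finite (Sig_star s)"
  by (simp add: Sig_star_def Sig_def)

lemma finite_configs: "finite (configs n s)"
proof -
  have "configs n s = {t. set t \<subseteq> Sig s \<and> length t = n}"
    by (auto simp: configs_def)
  then show ?thesis
    using finite_lists_length_eq[of "Sig s" n] by (simp add: Sig_def)
qed

lemma Tn_subset_configs: "Tn n s \<subseteq> configs n s"
  by (auto simp: Tn_def configs_def Sig_star_def)

lemma finite_Tn: "finite (Tn n s)"
  using finite_subset[OF Tn_subset_configs finite_configs] .

lemma Tn_nth_neq_0: "t \<in> Tn n s \<Longrightarrow> k < n \<Longrightarrow> t ! k \<noteq> 0"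
  unfolding Tn_def Sig_star_def by (auto dest!: nth_mem)

lemma Tn_nth_Suc_neq_uminus:
  "t \<in> Tn n s \<Longrightarrow> Suc k < n \<Longrightarrow> t ! k \<in> {1 .. int s} \<Longrightarrow> t ! Suc k \<noteq> - (t ! k)"
  unfolding Tn_def by auto

lemma replicate_1_in_Tn: "1 \<le> s \<Longrightarrow> replicate n 1 \<in> Tn n s"
  by (auto simp: Tn_def Sig_star_def Sig_def)

lemma not_local_move_Tn:
  assumes t: "t \<in> Tn n s"
  shows "\<not> local_move s t u"
proof
  assume "local_move s t u"
  then obtain k where "Suc k < length t"
    and "t ! k = 0 \<or> t ! Suc k = 0 \<or> (t ! k \<in> {1 .. int s} \<and> t ! Suc k = - (t ! k))"
    unfolding local_move_def by auto
  moreover have "length t = n"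
    using t by (simp add: Tn_def)
  ultimately show False
    using Tn_nth_neq_0[OF t] Tn_nth_Suc_neq_uminus[OF t] by (metis Suc_lessD)
qed

lemma equiv_strings_Tn_iff: "t \<in> Tn n s \<Longrightarrow> equiv_strings s t u \<longleftrightarrow> u = t"
  unfolding equiv_strings_def
  by (metis converse_rtranclpE not_local_move_Tn rtranclp.rtrancl_refl)

lemma equiv_class_Tn: "t \<in> Tn n s \<Longrightarrow> equiv_class n s t = {t}"
  using Tn_subset_configs by (auto simp: equiv_class_def equiv_strings_Tn_iff)

lemma class_state_Tn: "t \<in> Tn n s \<Longrightarrow> class_state n s t = ket t"
  by (simp add: class_state_def equiv_class_Tn ket_def fun_eq_iff)

interpretation V: vector_space cscale
  by unfold_locales (auto simp: cscale_def fun_eq_iff algebra_simps)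

lemma inj_ket: "inj ket"
  by (rule injI) (metis ket_def zero_neq_one)

lemma span_kets:
  assumes "finite A"
  shows "V.span (ket ` A) = {\<psi>. \<forall>t. t \<notin> A \<longrightarrow> \<psi> t = 0}"
proof
  show "{\<psi>. \<forall>t. t \<notin> A \<longrightarrow> \<psi> t = 0} \<subseteq> V.span (ket ` A)"
  proof
    fix \<psi> :: "int list \<Rightarrow> complex"
    assume "\<psi> \<in> {\<psi>. \<forall>t. t \<notin> A \<longrightarrow> \<psi> t = 0}"
    then have "\<psi> = (\<Sum>t\<in>A. cscale (\<psi> t) (ket t))"
      using assms by (auto simp: fun_eq_iff sum_fun_apply cscale_def ket_def if_distrib
                          cong: if_cong)
    also have "\<dots> \<in> V.span (ket ` A)"
      by (intro V.span_sum V.span_scale V.span_base) auto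
    finally show "\<psi> \<in> V.span (ket ` A)" .
  qed
  show "V.span (ket ` A) \<subseteq> {\<psi>. \<forall>t. t \<notin> A \<longrightarrow> \<psi> t = 0}"
    by (rule V.span_minimal) (auto simp: V.subspace_def ket_def cscale_def)
qed

lemma independent_kets:
  assumes "finite A"
  shows "V.independent (ket ` A)"
proof (rule V.independent_if_scalars_zero)
  show "finite (ket ` A)" using assms by simp
  fix c \<phi> assume zero: "(\<Sum>\<phi>\<in>ket ` A. cscale (c \<phi>) \<phi>) = 0" and "\<phi> \<in> ket ` A"
  then obtain t where t: "t \<in> A" "\<phi> = ket t" by auto
  have "0 = (\<Sum>\<phi>\<in>ket ` A. cscale (c \<phi>) \<phi>) t"
    using zero by simp
  also have "\<dots> = (\<Sum>u\<in>A. c (ket u) * ket u t)"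
    by (simp add: sum.reindex inj_on_subset[OF inj_ket] sum_fun_apply cscale_def)
  also have "\<dots> = (\<Sum>u\<in>A. if u = t then c (ket u) else 0)"
    by (rule sum.cong) (auto simp: ket_def)
  also have "\<dots> = c \<phi>"
    using t assms by simp
  finally show "c \<phi> = 0" by simp
qed

lemma hspace_eq_span: "hspace n s = V.span (ket ` configs n s)"
  by (simp add: span_kets[OF finite_configs] hspace_def)

lemma linear_Hop: "Vector_Spaces.linear cscale cscale (Hop n s J)"
  unfolding Vector_Spaces.linear_iff
proof (intro conjI allI V.vector_space_axioms)
  show "Hop n s J (\<phi> + \<psi>) = Hop n s J \<phi> + Hop n s J \<psi>" for \<phi> \<psi>
    by (simp add: Hop_def fun_eq_iff distrib_left sum.distrib)
  show "Hop n s J (cscale c \<psi>) = cscale c (Hop n s J \<psi>)" for c \<psi>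
    by (simp add: Hop_def cscale_def fun_eq_iff sum_distrib_left mult.left_commute)
qed

lemma finite_eigenvalues_Hop: "finite (eigenvalues n s J)"
proof -
  let ?E = "{c. \<exists>\<psi>\<in>V.span (ket ` configs n s). \<psi> \<noteq> 0 \<and> Hop n s J \<psi> = cscale c \<psi>}"
  have fin: "finite ?E"
    by (rule V.finite_eigenvalues[OF linear_Hop finite_imageI[OF finite_configs]])
  have "eigenvalues n s J = of_real -` ?E"
    by (simp add: eigenvalues_def hspace_eq_span cscale_def vimage_def)
  then show ?thesis
    using finite_vimageI[OF fin inj_of_real] by simp
qed

lemma hloc_eq_0:
  assumes "c \<noteq> 0" "d \<noteq> 0" "\<not> (c \<in> {1 .. int s} \<and> d = - c)"
  shows "hloc s a b c d = 0"
  using assms by (auto simp: hloc_def phi_def chi_def intro!: sum.neutral)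

lemma Hmat_Tn_eq_0:
  assumes u: "u \<in> Tn n s"
  shows "Hmat n s J t u = 0"
proof -
  have "hloc s (t ! k) (t ! Suc k) (u ! k) (u ! Suc k) = 0" if "k < n - 1" for k
    using that Tn_nth_neq_0[OF u] Tn_nth_Suc_neq_uminus[OF u] by (intro hloc_eq_0) auto
  moreover have "{k. k < n \<and> u ! k = 0} = {}"
    using Tn_nth_neq_0[OF u] by blast
  ultimately show ?thesis
    by (simp add: Hmat_def)
qed

lemma Hop_eq_0_if_supported_Tn:
  assumes "\<And>t. t \<notin> Tn n s \<Longrightarrow> \<psi> t = 0"
  shows "Hop n s J \<psi> = 0"
proof -
  have "Hmat n s J t u * \<psi> u = 0" for t u
    using assms Hmat_Tn_eq_0 by (cases "u \<in> Tn n s") auto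
  then show ?thesis
    by (auto simp: Hop_def fun_eq_iff intro!: sum.neutral)
qed

lemma Hop_ket_Tn: "t \<in> Tn n s \<Longrightarrow> Hop n s J (ket t) = 0"
  by (rule Hop_eq_0_if_supported_Tn) (auto simp: ket_def)

section \<open>The Hamiltonian as a sum of squares\<close>

definition clear_bond :: "nat \<Rightarrow> int list \<Rightarrow> int list" where
  "clear_bond k t = t[k := 0, Suc k := 0]"

definition bond_amp :: "int + int \<Rightarrow> int \<Rightarrow> int \<Rightarrow> complex" where
  "bond_amp x = (case x of Inl m \<Rightarrow> phi m | Inr m \<Rightarrow> chi m)"

(* The index (k, r, Inl m) resp. (k, r, Inr m) stands for phi_m resp. chi_m on sites k, k+1
   tensored with the basis string r elsewhere; r itself carries zeros on that bond. *)
fun bond_vec :: "nat \<times> int list \<times> (int + int) \<Rightarrow> int list \<Rightarrow> complex" where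
  "bond_vec (k, r, x) t = of_bool (clear_bond k t = r) * bond_amp x (t ! k) (t ! Suc k)"

definition bonds :: "nat \<Rightarrow> nat \<Rightarrow> (nat \<times> int list \<times> (int + int)) set" where
  "bonds n s = {0..<n - 1} \<times> configs n s \<times> (Sig_star s <+> {1 .. int s})"

lemma hloc_eq_sum_bond_amp:
  "hloc s a b c d = (\<Sum>x\<in>Sig_star s <+> {1 .. int s}. bond_amp x a b * cnj (bond_amp x c d))"
  by (simp add: hloc_def bond_amp_def sum.Plus finite_Sig_star comp_def)

lemma length_clear_bond [simp]: "length (clear_bond k t) = length t"
  by (simp add: clear_bond_def)

lemma clear_bond_in_configs:
  assumes "t \<in> configs n s"
  shows "clear_bond k t \<in> configs n s"
proof -
  have "set (clear_bond k t) \<subseteq> insert 0 (set t)"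
    unfolding clear_bond_def
    using set_update_subset_insert[of "t[k := 0]" "Suc k" 0] set_update_subset_insert[of t k 0]
    by blast
  moreover have "0 \<in> Sig s"
    by (simp add: Sig_def)
  ultimately show ?thesis
    using assms by (auto simp: configs_def)
qed

lemma clear_bond_eq_iff:
  assumes "length u = length t"
  shows "clear_bond k u = clear_bond k t \<longleftrightarrow> (\<forall>j<length t. j \<noteq> k \<and> j \<noteq> Suc k \<longrightarrow> t ! j = u ! j)"
proof
  assume eq: "clear_bond k u = clear_bond k t"
  show "\<forall>j<length t. j \<noteq> k \<and> j \<noteq> Suc k \<longrightarrow> t ! j = u ! j"
  proof (intro allI impI)
    fix j assume "j < length t" "j \<noteq> k \<and> j \<noteq> Suc k"
    moreover have "clear_bond k u ! j = clear_bond k t ! j"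
      using eq by simp
    ultimately show "t ! j = u ! j"
      by (simp add: clear_bond_def)
  qed
next
  assume agree: "\<forall>j<length t. j \<noteq> k \<and> j \<noteq> Suc k \<longrightarrow> t ! j = u ! j"
  show "clear_bond k u = clear_bond k t"
  proof (rule nth_equalityI)
    show "length (clear_bond k u) = length (clear_bond k t)"
      using assms by simp
    show "clear_bond k u ! j = clear_bond k t ! j" if "j < length (clear_bond k u)" for j
      using that agree assms
      by (cases "j = k \<or> j = Suc k") (auto simp: clear_bond_def nth_list_update)
  qed
qed

lemma eq_if_clear_bond_eq:
  assumes "length u = length t" "clear_bond k u = clear_bond k t" "u ! k = t ! k" "u ! Suc k = t ! Suc k"
  shows "u = t"
proof (rule nth_equalityI)
  show "u ! j = t ! j" if "j < length u" for j
    using assms that clear_bond_eq_iff[OF assms(1)] by (cases "j = k \<or> j = Suc k") auto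
qed (fact assms(1))

lemma Hmat_eq_gram:
  assumes t: "t \<in> configs n s" and u: "u \<in> configs n s"
  shows "Hmat n s J t u = (\<Sum>i\<in>bonds n s. bond_vec i t * cnj (bond_vec i u))
      + of_bool (t = u) * of_real (J * card {k. k < n \<and> t ! k = 0})"
proof -
  let ?X = "Sig_star s <+> {1 .. int s}"
  have len: "length u = length t" "length t = n"
    using t u by (auto simp: configs_def)
  have bond: "of_bool (\<forall>j<n. j \<noteq> k \<and> j \<noteq> Suc k \<longrightarrow> t ! j = u ! j)
        * hloc s (t ! k) (t ! Suc k) (u ! k) (u ! Suc k)
      = (\<Sum>r\<in>configs n s. \<Sum>x\<in>?X. bond_vec (k, r, x) t * cnj (bond_vec (k, r, x) u))" for k
  proof -
    have "(\<Sum>r\<in>configs n s. \<Sum>x\<in>?X. bond_vec (k, r, x) t * cnj (bond_vec (k, r, x) u))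
        = (\<Sum>r\<in>configs n s. if r = clear_bond k t
             then of_bool (clear_bond k u = r) * hloc s (t ! k) (t ! Suc k) (u ! k) (u ! Suc k) else 0)"
      by (rule sum.cong) (auto simp: hloc_eq_sum_bond_amp sum_distrib_left mult_ac)
    also have "\<dots> = of_bool (clear_bond k u = clear_bond k t) * hloc s (t ! k) (t ! Suc k) (u ! k) (u ! Suc k)"
      using clear_bond_in_configs[OF t] finite_configs by simp
    also have "clear_bond k u = clear_bond k t \<longleftrightarrow> (\<forall>j<n. j \<noteq> k \<and> j \<noteq> Suc k \<longrightarrow> t ! j = u ! j)"
      using clear_bond_eq_iff[OF len(1)] len(2) by simp
    finally show ?thesis ..
  qed
  have "(\<Sum>k\<in>{0..<n - 1}. of_bool (\<forall>j<n. j \<noteq> k \<and> j \<noteq> Suc k \<longrightarrow> t ! j = u ! j)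
        * hloc s (t ! k) (t ! Suc k) (u ! k) (u ! Suc k))
      = (\<Sum>i\<in>bonds n s. bond_vec i t * cnj (bond_vec i u))"
    by (simp only: bond bonds_def sum.cartesian_product) (auto intro: sum.cong)
  then show ?thesis
    by (simp add: Hmat_def)
qed

lemma eigenvector_energy_eq:
  assumes "Hop n s J \<psi> = (\<lambda>t. of_real e * \<psi> t)"
  shows "e * (\<Sum>t\<in>configs n s. (cmod (\<psi> t))\<^sup>2)
       = (\<Sum>i\<in>bonds n s. (cmod (\<Sum>u\<in>configs n s. cnj (bond_vec i u) * \<psi> u))\<^sup>2)
       + (\<Sum>t\<in>configs n s. J * card {k. k < n \<and> t ! k = 0} * (cmod (\<psi> t))\<^sup>2)"
proof -
  let ?C = "configs n s"
  have "of_real (e * (\<Sum>t\<in>?C. (cmod (\<psi> t))\<^sup>2)) = (\<Sum>t\<in>?C. cnj (\<psi> t) * (of_real e * \<psi> t))"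
    using complex_norm_square by (simp add: sum_distrib_left mult_ac)
  also have "\<dots> = (\<Sum>t\<in>?C. cnj (\<psi> t) * Hop n s J \<psi> t)"
    by (simp add: assms)
  also have "\<dots> = (\<Sum>t\<in>?C. cnj (\<psi> t) * (\<Sum>u\<in>?C. ((\<Sum>i\<in>bonds n s. bond_vec i t * cnj (bond_vec i u))
      + of_bool (t = u) * of_real (J * card {k. k < n \<and> t ! k = 0})) * \<psi> u))"
    by (intro sum.cong refl) (simp add: Hop_def Hmat_eq_gram cong: sum.cong)
  also have "\<dots> = of_real ((\<Sum>i\<in>bonds n s. (cmod (\<Sum>u\<in>?C. cnj (bond_vec i u) * \<psi> u))\<^sup>2)
       + (\<Sum>t\<in>?C. J * card {k. k < n \<and> t ! k = 0} * (cmod (\<psi> t))\<^sup>2))"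
    by (rule quadratic_form_gram_plus_diagonal[OF finite_configs])
  finally show ?thesis
    by (simp only: of_real_eq_iff)
qed

lemma eigenvalue_nonneg:
  assumes "0 \<le> J" "\<psi> \<in> hspace n s" "\<psi> \<noteq> 0" "Hop n s J \<psi> = (\<lambda>t. of_real e * \<psi> t)"
  shows "0 \<le> e"
proof -
  obtain t where t: "\<psi> t \<noteq> 0"
    using assms(3) by (auto simp: fun_eq_iff)
  then have "t \<in> configs n s"
    using assms(2) by (auto simp: hspace_def)
  then have "0 < (\<Sum>t\<in>configs n s. (cmod (\<psi> t))\<^sup>2)"
    using t finite_configs by (intro sum_pos2) auto
  moreover have "0 \<le> e * (\<Sum>t\<in>configs n s. (cmod (\<psi> t))\<^sup>2)"
    unfolding eigenvector_energy_eq[OF assms(4)] using assms(1) by (intro add_nonneg_nonneg sum_nonneg) auto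
  ultimately show ?thesis
    by (simp add: zero_le_mult_iff)
qed

lemma ground_energy_eq_0:
  assumes "1 \<le> s" "0 \<le> J"
  shows "ground_energy n s J = 0"
  unfolding ground_energy_def
proof (rule Min_eqI[OF finite_eigenvalues_Hop])
  let ?t = "replicate n 1"
  have "?t \<in> Tn n s"
    using assms(1) by (rule replicate_1_in_Tn)
  then have "ket ?t \<in> hspace n s" "ket ?t \<noteq> 0" "Hop n s J (ket ?t) = (\<lambda>u. of_real 0 * ket ?t u)"
    using Tn_subset_configs Hop_ket_Tn
    by (auto simp: hspace_def ket_def fun_eq_iff zero_fun_def)
  then show "0 \<in> eigenvalues n s J"
    unfolding eigenvalues_def by blast
  show "0 \<le> e" if "e \<in> eigenvalues n s J" for e
    using that eigenvalue_nonneg[OF assms(2)] unfolding eigenvalues_def by blast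
qed

section \<open>The ground space\<close>

lemma zero_energy_conditions:
  assumes J: "0 < J" and ground: "Hop n s J \<psi> = (\<lambda>t. of_real 0 * \<psi> t)"
  shows "\<forall>i\<in>bonds n s. (\<Sum>u\<in>configs n s. cnj (bond_vec i u) * \<psi> u) = 0"
    and "\<forall>t\<in>configs n s. card {k. k < n \<and> t ! k = 0} = 0 \<or> \<psi> t = 0"
proof -
  let ?A = "\<Sum>i\<in>bonds n s. (cmod (\<Sum>u\<in>configs n s. cnj (bond_vec i u) * \<psi> u))\<^sup>2"
  let ?B = "\<Sum>t\<in>configs n s. J * card {k. k < n \<and> t ! k = 0} * (cmod (\<psi> t))\<^sup>2"
  have "0 \<le> ?A" "0 \<le> ?B"
    using J by (auto intro!: sum_nonneg)
  moreover have "?A + ?B = 0"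
    using eigenvector_energy_eq[OF ground] by simp
  ultimately have "?A = 0" "?B = 0"
    by linarith+
  moreover have "finite (bonds n s)"
    by (simp add: bonds_def finite_configs finite_Sig_star)
  ultimately show "\<forall>i\<in>bonds n s. (\<Sum>u\<in>configs n s. cnj (bond_vec i u) * \<psi> u) = 0"
    and "\<forall>t\<in>configs n s. card {k. k < n \<and> t ! k = 0} = 0 \<or> \<psi> t = 0"
    using J finite_configs by (simp_all add: sum_nonneg_eq_0_iff)
qed

lemma sum_chi_bond_vec:
  assumes t: "t \<in> configs n s" and j: "Suc j < n" and m: "m \<noteq> 0" "t ! j = m" "t ! Suc j = - m"
  shows "(\<Sum>u\<in>configs n s. cnj (bond_vec (j, clear_bond j t, Inr m) u) * \<psi> u)
       = (\<psi> (clear_bond j t) - \<psi> t) / sqrt 2"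
proof -
  let ?r = "clear_bond j t"
  let ?f = "\<lambda>u. cnj (bond_vec (j, ?r, Inr m) u) * \<psi> u"
  have len: "length t = n"
    using t by (simp add: configs_def)
  have r: "?r ! j = 0" "?r ! Suc j = 0"
    using j len by (auto simp: clear_bond_def nth_list_update)
  have rr: "clear_bond j ?r = ?r"
    using len by (simp add: clear_bond_def list_update_swap)
  have "?f u = 0" if u: "u \<in> configs n s - {?r, t}" for u
  proof (cases "clear_bond j u = ?r")
    case True
    have "length u = length t"
      using u len by (simp add: configs_def)
    then have "\<not> (u ! j = 0 \<and> u ! Suc j = 0)" "\<not> (u ! j = m \<and> u ! Suc j = - m)"
      using eq_if_clear_bond_eq[of u ?r j] eq_if_clear_bond_eq[of u t j] True rr r m u by auto
    then show ?thesis
      by (auto simp: bond_amp_def chi_def)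
  qed simp
  then have "(\<Sum>u\<in>configs n s. ?f u) = (\<Sum>u\<in>{?r, t}. ?f u)"
    using t clear_bond_in_configs[OF t] by (intro sum.mono_neutral_right finite_configs) auto
  also have "\<dots> = ?f ?r + ?f t"
    using r m by (subst sum.insert) auto
  also have "\<dots> = (\<psi> ?r - \<psi> t) / sqrt 2"
    using r m rr by (simp add: bond_amp_def chi_def diff_divide_distrib)
  finally show ?thesis .
qed

lemma ground_state_vanishes_off_Tn:
  assumes J: "0 < J" and \<psi>: "\<psi> \<in> hspace n s" and ground: "Hop n s J \<psi> = (\<lambda>t. of_real 0 * \<psi> t)"
    and "t \<notin> Tn n s"
  shows "\<psi> t = 0"
proof (cases "t \<in> configs n s")
  case False
  then show ?thesis
    using \<psi> by (simp add: hspace_def)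
next
  case t: True
  have at_zero: "\<psi> u = 0" if "u \<in> configs n s" "k < n" "u ! k = 0" for u k
  proof -
    have "k \<in> {k. k < n \<and> u ! k = 0}"
      using that by simp
    moreover have "finite {k. k < n \<and> u ! k = 0}"
      by simp
    ultimately have "card {k. k < n \<and> u ! k = 0} \<noteq> 0"
      by (auto simp: card_eq_0_iff)
    then show ?thesis
      using zero_energy_conditions(2)[OF J ground] that(1) by auto
  qed
  show ?thesis
  proof (cases "\<exists>k<n. t ! k = 0")
    case True
    then show ?thesis
      using at_zero t by blast
  next
    case False
    with t have "set t \<subseteq> Sig_star s"
      by (auto simp: configs_def Sig_star_def in_set_conv_nth)
    then obtain j where j: "Suc j < n" "t ! j \<in> {1 .. int s}" "t ! Suc j = - (t ! j)"
      using t \<open>t \<notin> Tn n s\<close> by (auto simp: Tn_def configs_def)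
    let ?r = "clear_bond j t"
    have "?r \<in> configs n s"
      using t by (rule clear_bond_in_configs)
    moreover have "?r ! j = 0"
      using t j by (auto simp: configs_def clear_bond_def nth_list_update)
    ultimately have "\<psi> ?r = 0"
      using j at_zero by (meson Suc_lessD)
    moreover have "(j, ?r, Inr (t ! j)) \<in> bonds n s"
      using j \<open>?r \<in> configs n s\<close> by (auto simp: bonds_def)
    then have "(\<Sum>u\<in>configs n s. cnj (bond_vec (j, ?r, Inr (t ! j)) u) * \<psi> u) = 0"
      using zero_energy_conditions(1)[OF J ground] by blast
    ultimately show ?thesis
      using sum_chi_bond_vec[OF t j(1), of "t ! j"] j by simp
  qed
qed

lemma ground_space_eq:
  assumes "1 \<le> s" "0 < J"
  shows "ground_space n s J = {\<psi>. \<forall>t. t \<notin> Tn n s \<longrightarrow> \<psi> t = 0}"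
proof -
  have "ground_space n s J = {\<psi> \<in> hspace n s. Hop n s J \<psi> = (\<lambda>t. of_real 0 * \<psi> t)}"
    using assms by (simp add: ground_space_def ground_energy_eq_0)
  also have "\<dots> = {\<psi>. \<forall>t. t \<notin> Tn n s \<longrightarrow> \<psi> t = 0}"
  proof (intro equalityI subsetI)
    fix \<psi> assume "\<psi> \<in> {\<psi> \<in> hspace n s. Hop n s J \<psi> = (\<lambda>t. of_real 0 * \<psi> t)}"
    then show "\<psi> \<in> {\<psi>. \<forall>t. t \<notin> Tn n s \<longrightarrow> \<psi> t = 0}"
      using ground_state_vanishes_off_Tn[OF assms(2)] by blast
  next
    fix \<psi> :: "int list \<Rightarrow> complex"
    assume "\<psi> \<in> {\<psi>. \<forall>t. t \<notin> Tn n s \<longrightarrow> \<psi> t = 0}"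
    then have "\<psi> \<in> hspace n s" "Hop n s J \<psi> = 0"
      using Tn_subset_configs by (auto simp: hspace_def intro: Hop_eq_0_if_supported_Tn)
    then show "\<psi> \<in> {\<psi> \<in> hspace n s. Hop n s J \<psi> = (\<lambda>t. of_real 0 * \<psi> t)}"
      by (simp add: zero_fun_def)
  qed
  finally show ?thesis .
qed

theorem lemma8:
  fixes s n :: nat and J :: real
  assumes "s \<ge> 1" and "n \<ge> 1" and "J > 0"
  shows "(\<forall>t\<in>Tn n s. equiv_class n s t = {t} \<and> class_state n s t = ket t)
       \<and> ground_space n s J = module.span cscale (ket ` Tn n s)
       \<and> vector_space.dim cscale (ground_space n s J) = card (Tn n s)"
proof -
  have ground: "ground_space n s J = V.span (ket ` Tn n s)"
    using ground_space_eq[OF assms(1,3)] span_kets[OF finite_Tn] by simp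
  have "V.dim (V.span (ket ` Tn n s)) = card (Tn n s)"
    using V.dim_span_eq_card_independent[OF independent_kets[OF finite_Tn]]
      card_image[OF inj_on_subset[OF inj_ket]] by simp
  with ground show ?thesis
    using equiv_class_Tn class_state_Tn by simp
qed

end
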